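(* Let $F$, $G$, $\pi$, $\Pi$ be as in the context, and let $\Pi_1\colon\Sigma_N\times I\to\Sigma_N$ and $\Pi_1^A\colon\Sigma_A\times I\to\Sigma_A$ be the projections onto the first coordinate. Then $\pi\circ\Pi_1^A=\Pi_1\circ\Pi$. Moreover, if $\lambda_0$ is a Borel probability on $\Sigma_N$, $\lambda$ is a Borel probability on $\Sigma_A$ with $\pi_*\lambda=\lambda_0$, and $\mu$ is an ergodic $G$-invariant probability on $\Sigma_A\times I$ with $(\Pi_1^A)_*\mu=\lambda$, then $\Pi_*\mu$ is an ergodic $F$-invariant probability on $\Sigma_N\times I$ and $(\Pi_1)_*(\Pi_*\mu)=\lambda_0$.
   Context: $I=[0,1]$, $R(x)=1-x$. $F(\xi,p)=(\sigma(\xi),f_{\xi_0}(p))$ on $\Sigma_N\times I$, $\Sigma_N=\{1,\ldots,N\}^{\mathbb Z}$, with $f_i$ $C^1$-diffeomorphisms onto their images. $\mathcal I_P$ / $\mathcal I_R$: indices of orientation preserving / reversing $f_i$. $A=(a_{ij})_{i,j=1}^{2N}$ with $a_{ij}=1$ if ($i\in\mathcal I_P$, $j\le N$), or ($i\in\mathcal I_R$, $j>N$), or ($i-N\in\mathcal I_P$, $j>N$), or ($i-N\in\mathcal I_R$, $j\le N$), else $0$; $\Sigma_A$ the $A$-admissible sequences in $\{1,\ldots,2N\}^{\mathbb Z}$ with shift $\sigma_A$; $\pi(\omega)_n=\overline{\omega_n}$ ($\overline i=i$ for $i\le N$, $\overline i=i-N$ otherwise). $G(\omega,x)=(\sigma_A(\omega),g_{\omega_0}(x))$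 with $g_i=f_i$, $g_{i+N}=R\circ f_i\circ R$ ($i\in\mathcal I_P$), $g_i=R\circ f_i$, $g_{i+N}=f_i\circ R$ ($i\in\mathcal I_R$). $C=\{\omega\colon\omega_0\le N\}$; $\Pi(\omega,x)=(\pi(\omega),x)$ if $\omega\in C$, $(\pi(\omega),R(x))$ otherwise. *)

theory Defs
  imports "HOL-Probability.Probability"
begin

definition Iv :: "real set" where "Iv = {0..1}"
definition Rf :: "real \<Rightarrow> real" where "Rf x = 1 - x"

text \<open>C^1 diffeomorphism of I onto its image (derivative one-sided at endpoints).
  A C^1 injective map with nowhere vanishing derivative has a C^1 inverse.\<close>
definition C1_diffeo_onto_image :: "(real \<Rightarrow> real) \<Rightarrow> bool" where
  "C1_diffeo_onto_image h \<longleftrightarrow> inj_on h Iv \<and>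
     (\<exists>h'. (\<forall>x\<in>Iv. (h has_real_derivative h' x) (at x within Iv))
          \<and> continuous_on Iv h' \<and> (\<forall>x\<in>Iv. h' x \<noteq> 0))"

definition orient_pres :: "(real \<Rightarrow> real) \<Rightarrow> bool" where
  "orient_pres h \<longleftrightarrow> (\<forall>x\<in>Iv. \<forall>y\<in>Iv. x < y \<longrightarrow> h x < h y)"
definition orient_rev :: "(real \<Rightarrow> real) \<Rightarrow> bool" where
  "orient_rev h \<longleftrightarrow> (\<forall>x\<in>Iv. \<forall>y\<in>Iv. x < y \<longrightarrow> h y < h x)"

definition IP :: "nat \<Rightarrow> (nat \<Rightarrow> real \<Rightarrow> real) \<Rightarrow> nat set" where
  "IP N f = {i\<in>{1..N}. orient_pres (f i)}"
definition IR :: "nat \<Rightarrow> (nat \<Rightarrow> real \<Rightarrow> real) \<Rightarrow> nat set" where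
  "IR N f = {i\<in>{1..N}. orient_rev (f i)}"

definition SigmaN :: "nat \<Rightarrow> (int \<Rightarrow> nat) set" where
  "SigmaN N = {\<xi>. \<forall>n. \<xi> n \<in> {1..N}}"

definition shift :: "(int \<Rightarrow> nat) \<Rightarrow> (int \<Rightarrow> nat)" where
  "shift \<xi> = (\<lambda>n. \<xi> (n + 1))"

definition Amat :: "nat \<Rightarrow> (nat \<Rightarrow> real \<Rightarrow> real) \<Rightarrow> nat \<Rightarrow> nat \<Rightarrow> bool" where
  "Amat N f i j \<longleftrightarrow>
     (i \<in> IP N f \<and> j \<le> N) \<or> (i \<in> IR N f \<and> j > N) \<or>
     (i > N \<and> i - N \<in> IP N f \<and> j > N) \<or> (i > N \<and> i - N \<in> IR N f \<and> j \<le> N)"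

definition SigmaA :: "nat \<Rightarrow> (nat \<Rightarrow> real \<Rightarrow> real) \<Rightarrow> (int \<Rightarrow> nat) set" where
  "SigmaA N f = {\<omega>. (\<forall>n. \<omega> n \<in> {1..2*N}) \<and> (\<forall>n. Amat N f (\<omega> n) (\<omega> (n + 1)))}"

definition bar :: "nat \<Rightarrow> nat \<Rightarrow> nat" where
  "bar N i = (if i \<le> N then i else i - N)"

definition piA :: "nat \<Rightarrow> (int \<Rightarrow> nat) \<Rightarrow> (int \<Rightarrow> nat)" where
  "piA N \<omega> = (\<lambda>n. bar N (\<omega> n))"

definition gmap :: "nat \<Rightarrow> (nat \<Rightarrow> real \<Rightarrow> real) \<Rightarrow> nat \<Rightarrow> real \<Rightarrow> real" where
  "gmap N f i =
     (if i \<le> N then (if i \<in> IP N f then f i else Rf \<circ> f i)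
      else (if i - N \<in> IP N f then Rf \<circ> f (i - N) \<circ> Rf else f (i - N) \<circ> Rf))"

definition Fmap :: "(nat \<Rightarrow> real \<Rightarrow> real) \<Rightarrow> (int \<Rightarrow> nat) \<times> real \<Rightarrow> (int \<Rightarrow> nat) \<times> real" where
  "Fmap f z = (shift (fst z), f (fst z 0) (snd z))"

definition Gmap :: "nat \<Rightarrow> (nat \<Rightarrow> real \<Rightarrow> real) \<Rightarrow> (int \<Rightarrow> nat) \<times> real \<Rightarrow> (int \<Rightarrow> nat) \<times> real" where
  "Gmap N f z = (shift (fst z), gmap N f (fst z 0) (snd z))"

definition PiMap :: "nat \<Rightarrow> (int \<Rightarrow> nat) \<times> real \<Rightarrow> (int \<Rightarrow> nat) \<times> real" where
  "PiMap N z = (if fst z 0 \<le> N then (piA N (fst z), snd z) else (piA N (fst z), Rf (snd z)))"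

definition SN :: "nat \<Rightarrow> (int \<Rightarrow> nat) measure" where
  "SN N = restrict_space borel (SigmaN N)"
definition SA :: "nat \<Rightarrow> (nat \<Rightarrow> real \<Rightarrow> real) \<Rightarrow> (int \<Rightarrow> nat) measure" where
  "SA N f = restrict_space borel (SigmaA N f)"
definition SNI :: "nat \<Rightarrow> ((int \<Rightarrow> nat) \<times> real) measure" where
  "SNI N = restrict_space borel (SigmaN N \<times> Iv)"
definition SAI :: "nat \<Rightarrow> (nat \<Rightarrow> real \<Rightarrow> real) \<Rightarrow> ((int \<Rightarrow> nat) \<times> real) measure" where
  "SAI N f = restrict_space borel (SigmaA N f \<times> Iv)"

definition invariant_prob :: "'a measure \<Rightarrow> ('a \<Rightarrow> 'a) \<Rightarrow> bool" where
  "invariant_prob M T \<longleftrightarrow> prob_space M \<and> T \<in> M \<rightarrow>\<^sub>M M \<and> distr M M T = M"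

definition ergodic_prob :: "'a measure \<Rightarrow> ('a \<Rightarrow> 'a) \<Rightarrow> bool" where
  "ergodic_prob M T \<longleftrightarrow> invariant_prob M T \<and>
     (\<forall>A\<in>sets M. T -` A \<inter> space M = A \<longrightarrow> emeasure M A = 0 \<or> emeasure M A = 1)"

end

theory Submission
  imports Defs
begin

text \<open>\<open>\<Pi>\<close> semiconjugates \<open>G\<close> to \<open>F\<close>, i.e. \<open>F \<circ> \<Pi> = \<Pi> \<circ> G\<close> on \<open>\<Sigma>\<^sub>A \<times> I\<close>. By construction
  \<open>g\<^sub>i = R\<^sup>b \<circ> f\<^sub>j \<circ> R\<^sup>a\<close> with \<open>j = bar N i\<close>, where \<open>a\<close> records whether \<open>i\<close> lies in the
  upper copy \<open>{N+1..2N}\<close> and the matrix \<open>A\<close> forces \<open>b\<close> to record whether the next symbol does; since \<open>\<Pi>\<close> applies \<open>R\<close> exactly over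
  the upper copy, these reflections cancel. Hence \<open>\<Pi>\<^sub>*\<mu>\<close> is a factor of the ergodic system
  \<open>(G, \<mu>)\<close>, and factors of ergodic invariant measures are ergodic and invariant. Finally \<open>\<Pi>\<close> acts
  on the base by \<open>\<pi>\<close>, so the base marginal of \<open>\<Pi>\<^sub>*\<mu>\<close> is \<open>\<pi>\<^sub>*\<lambda> = \<lambda>\<^sub>0\<close>.\<close>

lemma invariant_prob_distr_factor:
  assumes "invariant_prob M T" and p: "p \<in> M \<rightarrow>\<^sub>M M'" and S: "S \<in> M' \<rightarrow>\<^sub>M M'"
    and commute: "\<And>x. x \<in> space M \<Longrightarrow> S (p x) = p (T x)"
  shows "invariant_prob (distr M M' p) S"
proof -
  have "prob_space M" and T: "T \<in> M \<rightarrow>\<^sub>M M" and inv: "distr M M T = M"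
    using assms(1) by (auto simp: invariant_prob_def)
  have "distr (distr M M' p) (distr M M' p) S = distr (distr M M' p) M' S"
    by (rule distr_cong) auto
  also have "\<dots> = distr M M' (S \<circ> p)"
    by (rule distr_distr[OF S p])
  also have "\<dots> = distr M M' (p \<circ> T)"
    by (rule distr_cong) (auto simp: commute)
  also have "\<dots> = distr (distr M M T) M' p"
    by (rule distr_distr[OF p T, symmetric])
  finally have "distr (distr M M' p) (distr M M' p) S = distr M M' p"
    by (simp add: inv)
  moreover have "prob_space (distr M M' p)"
    by (rule prob_space.prob_space_distr[OF \<open>prob_space M\<close> p])
  moreover have "S \<in> distr M M' p \<rightarrow>\<^sub>M distr M M' p"
    using S by simp
  ultimately show ?thesis
    by (simp add: invariant_prob_def)
qed

lemma ergodic_prob_distr_factor: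
  assumes erg: "ergodic_prob M T" and p: "p \<in> M \<rightarrow>\<^sub>M M'" and S: "S \<in> M' \<rightarrow>\<^sub>M M'"
    and commute: "\<And>x. x \<in> space M \<Longrightarrow> S (p x) = p (T x)"
  shows "ergodic_prob (distr M M' p) S"
  unfolding ergodic_prob_def
proof (intro conjI ballI impI)
  show "invariant_prob (distr M M' p) S"
    using erg p S commute by (intro invariant_prob_distr_factor) (auto simp: ergodic_prob_def)
next
  fix A assume A: "A \<in> sets (distr M M' p)" and A_inv: "S -` A \<inter> space (distr M M' p) = A"
  have T: "T \<in> M \<rightarrow>\<^sub>M M"
    using erg by (simp add: ergodic_prob_def invariant_prob_def)
  define B where "B = p -` A \<inter> space M"
  have B: "B \<in> sets M"
    using A p unfolding B_def by (simp add: measurable_sets)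
  have "T -` B \<inter> space M = B"
  proof (intro set_eqI iffI)
    fix x assume "x \<in> T -` B \<inter> space M"
    then have "x \<in> space M" "S (p x) \<in> A"
      by (auto simp: B_def commute)
    then show "x \<in> B"
      using A_inv measurable_space[OF p] by (auto simp: B_def)
  next
    fix x assume x: "x \<in> B"
    then have "S (p x) \<in> A"
      using A_inv measurable_space[OF p] by (auto simp: B_def)
    then show "x \<in> T -` B \<inter> space M"
      using x measurable_space[OF T] by (auto simp: B_def commute)
  qed
  then have "emeasure M B = 0 \<or> emeasure M B = 1"
    using erg B by (simp add: ergodic_prob_def)
  moreover have "emeasure (distr M M' p) A = emeasure M B"
    using A p unfolding B_def by (simp add: emeasure_distr)
  ultimately show "emeasure (distr M M' p) A = 0 \<or> emeasure (distr M M' p) A = 1"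
    by simp
qed

lemma measurable_restrict_borel_continuous:
  assumes "continuous_on S h" and "h ` S \<subseteq> T"
  shows "h \<in> restrict_space borel S \<rightarrow>\<^sub>M restrict_space borel T"
  using assms
  by (intro measurable_restrict_space2 borel_measurable_continuous_on_restrict)
     (auto simp: space_restrict_space)

lemma continuous_on_coordinate: "continuous_on S (\<lambda>x::'a \<Rightarrow> 'b::topological_space. x n)"
  by (rule continuous_on_subset[OF continuous_on_product_coordinates]) simp

lemma measurable_first_symbol:
  fixes S :: "((int \<Rightarrow> nat) \<times> 'a::topological_space) set"
  assumes "\<And>z. z \<in> S \<Longrightarrow> fst z 0 \<in> I"
  shows "(\<lambda>z. fst z 0) \<in> restrict_space borel S \<rightarrow>\<^sub>M count_space I"
proof -
  have "continuous_on S (\<lambda>z. fst z 0)"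
    by (intro continuous_on_compose2[OF continuous_on_coordinate continuous_on_fst[OF continuous_on_id]]) auto
  then have "(\<lambda>z. fst z 0) \<in> restrict_space borel S \<rightarrow>\<^sub>M count_space UNIV"
    using borel_measurable_continuous_on_restrict measurable_cong_sets[OF refl sets_borel_eq_count_space]
    by blast
  then have "(\<lambda>z. fst z 0) \<in> restrict_space borel S \<rightarrow>\<^sub>M restrict_space (count_space UNIV) I"
    using assms by (intro measurable_restrict_space2) (auto simp: space_restrict_space)
  then show ?thesis
    by (simp add: restrict_count_space)
qed

lemma measurable_restrict_borel_by_first_symbol:
  fixes h :: "nat \<Rightarrow> (int \<Rightarrow> nat) \<times> 'a::topological_space \<Rightarrow> 'b::topological_space"
  assumes "countable I" and "\<And>z. z \<in> S \<Longrightarrow> fst z 0 \<in> I"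
    and "\<And>i. i \<in> I \<Longrightarrow> continuous_on S (h i)" and "\<And>i. i \<in> I \<Longrightarrow> h i ` S \<subseteq> T"
  shows "(\<lambda>z. h (fst z 0) z) \<in> restrict_space borel S \<rightarrow>\<^sub>M restrict_space borel T"
proof (rule measurable_compose_countable'[where I = I])
  show "(\<lambda>z. fst z 0) \<in> restrict_space borel S \<rightarrow>\<^sub>M count_space I"
    using assms(2) by (rule measurable_first_symbol)
next
  fix i assume "i \<in> I"
  then show "h i \<in> restrict_space borel S \<rightarrow>\<^sub>M restrict_space borel T"
    using assms by (intro measurable_restrict_borel_continuous) auto
qed (use assms(1) in simp)

lemma continuous_on_shift: "continuous_on S shift"
  unfolding shift_def by (intro continuous_on_coordinatewise_then_product continuous_on_coordinate)

lemma continuous_on_piA: "continuous_on S (piA N)"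
  unfolding piA_def
  by (intro continuous_on_coordinatewise_then_product
        continuous_on_compose2[OF Topological_Spaces.continuous_on_discrete continuous_on_coordinate]) auto

lemma piA_shift: "piA N (shift \<omega>) = shift (piA N \<omega>)"
  by (simp add: piA_def shift_def)

lemma piA_in_SigmaN:
  assumes "\<omega> \<in> SigmaA N f"
  shows "piA N \<omega> \<in> SigmaN N"
proof -
  have "bar N (\<omega> n) \<in> {1..N}" for n
    using assms by (auto simp: SigmaA_def bar_def dest: spec[of _ n])
  then show ?thesis
    by (simp add: SigmaN_def piA_def)
qed

lemma C1_diffeo_onto_image_continuous_on: "C1_diffeo_onto_image h \<Longrightarrow> continuous_on Iv h"
  unfolding C1_diffeo_onto_image_def by (blast intro: DERIV_continuous_on)

lemma not_orient_pres_and_rev: "\<not> (orient_pres h \<and> orient_rev h)"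
proof
  assume "orient_pres h \<and> orient_rev h"
  then have "h 0 < h 1" and "h 1 < h 0"
    by (auto simp: orient_pres_def orient_rev_def Iv_def)
  then show False by simp
qed

lemma Fmap_PiMap:
  assumes "z \<in> SigmaA N f \<times> Iv"
  shows "Fmap f (PiMap N z) = PiMap N (Gmap N f z)"
proof -
  obtain \<omega> x where z: "z = (\<omega>, x)" by (cases z)
  have "\<omega> 0 \<in> {1..2*N}" and "Amat N f (\<omega> 0) (\<omega> 1)"
    using assms unfolding z SigmaA_def by (auto dest: spec[of _ 0])
  then have "snd (Fmap f (PiMap N z)) = snd (PiMap N (Gmap N f z))"
    using not_orient_pres_and_rev[of "f (\<omega> 0)"] not_orient_pres_and_rev[of "f (\<omega> 0 - N)"]
    by (auto simp: z Fmap_def PiMap_def Gmap_def gmap_def piA_def shift_def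
        Amat_def IP_def IR_def Rf_def bar_def)
  moreover have "fst (Fmap f (PiMap N z)) = fst (PiMap N (Gmap N f z))"
    by (simp add: z Fmap_def PiMap_def Gmap_def piA_shift)
  ultimately show ?thesis
    by (simp add: prod_eq_iff)
qed

lemma measurable_PiMap: "PiMap N \<in> SAI N f \<rightarrow>\<^sub>M SNI N"
proof -
  define h where "h i z = (piA N (fst z), if i \<le> N then snd z else Rf (snd z))" for i z
  have "(\<lambda>z. h (fst z 0) z) \<in> SAI N f \<rightarrow>\<^sub>M SNI N"
    unfolding SAI_def SNI_def
  proof (rule measurable_restrict_borel_by_first_symbol[where I = "{1..2*N}"])
    fix i
    show "continuous_on (SigmaA N f \<times> Iv) (h i)"
      unfolding h_def Rf_def
      by (cases "i \<le> N") (auto intro!: continuous_intros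
            continuous_on_compose2[OF continuous_on_piA continuous_on_fst[OF continuous_on_id]])
    show "h i ` (SigmaA N f \<times> Iv) \<subseteq> SigmaN N \<times> Iv"
      by (auto simp: h_def Iv_def Rf_def piA_in_SigmaN)
  qed (auto simp: SigmaA_def intro: countable_finite)
  moreover have "PiMap N = (\<lambda>z. h (fst z 0) z)"
    by (auto simp: PiMap_def h_def)
  ultimately show ?thesis by simp
qed

lemma measurable_Fmap:
  assumes "\<And>i. i \<in> {1..N} \<Longrightarrow> continuous_on Iv (f i) \<and> f i ` Iv \<subseteq> Iv"
  shows "Fmap f \<in> SNI N \<rightarrow>\<^sub>M SNI N"
proof -
  define h where "h i z = (shift (fst z), f i (snd z))" for i and z :: "(int \<Rightarrow> nat) \<times> real"
  have "(\<lambda>z. h (fst z 0) z) \<in> SNI N \<rightarrow>\<^sub>M SNI N"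
    unfolding SNI_def
  proof (rule measurable_restrict_borel_by_first_symbol[where I = "{1..N}"])
    fix i assume "i \<in> {1..N}"
    then have "continuous_on Iv (f i)" and "f i ` Iv \<subseteq> Iv"
      using assms by auto
    show "continuous_on (SigmaN N \<times> Iv) (h i)"
      unfolding h_def using \<open>continuous_on Iv (f i)\<close>
      by (auto intro!: continuous_on_Pair
            continuous_on_compose2[OF continuous_on_shift continuous_on_fst[OF continuous_on_id]]
            continuous_on_compose2[OF _ continuous_on_snd[OF continuous_on_id]])
    show "h i ` (SigmaN N \<times> Iv) \<subseteq> SigmaN N \<times> Iv"
      unfolding h_def using \<open>f i ` Iv \<subseteq> Iv\<close> by (auto simp: SigmaN_def shift_def)
  qed (auto simp: SigmaN_def intro: countable_finite)
  moreover have "Fmap f = (\<lambda>z. h (fst z 0) z)"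
    by (auto simp: Fmap_def h_def)
  ultimately show ?thesis by simp
qed

theorem lemma3p14:
  fixes N :: nat and f :: "nat \<Rightarrow> real \<Rightarrow> real"
  assumes "N \<ge> 1"
    and "\<forall>i\<in>{1..N}. C1_diffeo_onto_image (f i) \<and> f i ` Iv \<subseteq> Iv"
  shows "(\<forall>z\<in>SigmaA N f \<times> Iv. piA N (fst z) = fst (PiMap N z))
    \<and> (\<forall>lam0 lam \<mu>.
         prob_space lam0 \<and> sets lam0 = sets (SN N) \<and>
         prob_space lam \<and> sets lam = sets (SA N f) \<and>
         distr lam (SN N) (piA N) = lam0 \<and>
         sets \<mu> = sets (SAI N f) \<and> ergodic_prob \<mu> (Gmap N f) \<and>
         distr \<mu> (SA N f) fst = lam
       \<longrightarrow> ergodic_prob (distr \<mu> (SNI N) (PiMap N)) (Fmap f) \<and>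
           distr (distr \<mu> (SNI N) (PiMap N)) (SN N) fst = lam0)"
proof (intro conjI allI impI)
  show "\<forall>z\<in>SigmaA N f \<times> Iv. piA N (fst z) = fst (PiMap N z)"
    by (simp add: PiMap_def)
next
  fix lam0 lam \<mu>
  assume H: "prob_space lam0 \<and> sets lam0 = sets (SN N) \<and>
         prob_space lam \<and> sets lam = sets (SA N f) \<and>
         distr lam (SN N) (piA N) = lam0 \<and>
         sets \<mu> = sets (SAI N f) \<and> ergodic_prob \<mu> (Gmap N f) \<and>
         distr \<mu> (SA N f) fst = lam"
  then have sets_\<mu>: "sets \<mu> = sets (SAI N f)"
    by blast
  then have space_\<mu>: "space \<mu> = SigmaA N f \<times> Iv"
    by (simp add: sets_eq_imp_space_eq SAI_def space_restrict_space)
  have PiMap: "PiMap N \<in> \<mu> \<rightarrow>\<^sub>M SNI N"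
    using measurable_PiMap measurable_cong_sets[OF sets_\<mu> refl] by blast
  have "Fmap f \<in> SNI N \<rightarrow>\<^sub>M SNI N"
    using assms(2) by (intro measurable_Fmap) (auto intro: C1_diffeo_onto_image_continuous_on)
  then show "ergodic_prob (distr \<mu> (SNI N) (PiMap N)) (Fmap f)"
    using H PiMap by (intro ergodic_prob_distr_factor) (auto simp: space_\<mu> Fmap_PiMap)
  have fst_SNI: "fst \<in> SNI N \<rightarrow>\<^sub>M SN N" and fst_\<mu>: "fst \<in> \<mu> \<rightarrow>\<^sub>M SA N f"
    and piA: "piA N \<in> SA N f \<rightarrow>\<^sub>M SN N"
    unfolding measurable_cong_sets[OF sets_\<mu> refl] SNI_def SN_def SAI_def SA_def
    by (auto intro!: measurable_restrict_borel_continuous continuous_on_fst continuous_on_id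
        continuous_on_piA piA_in_SigmaN)
  have "distr (distr \<mu> (SNI N) (PiMap N)) (SN N) fst = distr \<mu> (SN N) (fst \<circ> PiMap N)"
    by (rule distr_distr[OF fst_SNI PiMap])
  also have "\<dots> = distr \<mu> (SN N) (piA N \<circ> fst)"
    by (rule distr_cong) (auto simp: PiMap_def)
  also have "\<dots> = distr (distr \<mu> (SA N f) fst) (SN N) (piA N)"
    by (rule distr_distr[OF piA fst_\<mu>, symmetric])
  finally show "distr (distr \<mu> (SNI N) (PiMap N)) (SN N) fst = lam0"
    using H by simp
qed

end
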